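(* Let $T$ be a normal spanning tree of a connected graph $G$ with $n$ vertices and $m$ edges. For any $\mathbf{0}\ne r=(r_1,\dots,r_{m-n+1})\in\mathbb{I}^{m-n+1}$, let $s=(2\pi-r_1,\dots,2\pi-r_{m-n+1})$ with entries taken modulo $2\pi$ (so $s\in\mathbb{I}^{m-n+1}$). Then $\mathcal{A}_T(r)$ and $\mathcal{A}_T(s)$ are $\mathbb{T}$-cospectral, i.e. all $\mathbb{T}$-gain graphs in $\mathcal{A}_T(r)\cup\mathcal{A}_T(s)$ have adjacency matrices with the same spectrum.
   Context: Graphs are finite, simple and undirected. $\mathbb{T}=\{z\in\mathbb{C}:|z|=1\}$, $\mathbb{I}=[0,2\pi)$, $\mathbf{0}=(0,\dots,0)$. A $\mathbb{T}$-gain on $G$ is a map $\varphi$ from oriented edges to $\mathbb{T}$ with $\varphi(\overrightarrow{e_{ts}})=\varphi(\overrightarrow{e_{st}})^{-1}$; $A(\Phi)$ for $\Phi=(G,\varphi)$ is the Hermitian matrix with $(s,t)$ entry $\varphi(\overrightarrow{e_{st}})$ if $v_s\sim v_t$, else $0$; $\mathcal{T}_G$ is the set of all $\mathbb{T}$-gain graphs on $G$. The gain of a directed cycle is the product of gains of its oriented edges. A rooted spanning tree $T$ with root $v_r$ induces the tree order ($v_x\le v_y$ iff $v_x$ is on the $T$-path from $v_r$ to $v_y$); $T$ is normal if adjacent vertices of $G$ are always comparable. The suitably oriented graph $\overrightarrow{G_T}$ orients each edge $e_{st}$ with $v_s\le v_t$ as $\overrightarrow{e_{st}}$ if $e_{st}\in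 E(T)$ and as $\overrightarrow{e_{ts}}$ otherwise; the $m-n+1$ fundamental cycles of $T$ become directed cycles $\overrightarrow{C_j(T)}$. For $r=(c_1,\dots,c_{m-n+1})\in\mathbb{I}^{m-n+1}$, $\mathcal{A}_T(r)=\{(G,\varphi)\in\mathcal{T}_G:\varphi(\overrightarrow{C_j(T)})=e^{ic_j}\ \forall j\}$. *)

theory Defs
  imports "Jordan_Normal_Form.Char_Poly" "HOL-Computational_Algebra.Fundamental_Theorem_Algebra"
begin

definition gr_simple :: "nat set \<Rightarrow> (nat \<Rightarrow> nat \<Rightarrow> bool) \<Rightarrow> bool" where
  "gr_simple V E \<longleftrightarrow> finite V \<and> (\<forall>u v. E u v \<longrightarrow> u \<in> V \<and> v \<in> V \<and> E v u \<and> u \<noteq> v)"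

definition gr_walk :: "(nat \<Rightarrow> nat \<Rightarrow> bool) \<Rightarrow> nat list \<Rightarrow> bool" where
  "gr_walk E xs \<longleftrightarrow> xs \<noteq> [] \<and> (\<forall>i. Suc i < length xs \<longrightarrow> E (xs ! i) (xs ! Suc i))"

definition gr_path :: "(nat \<Rightarrow> nat \<Rightarrow> bool) \<Rightarrow> nat list \<Rightarrow> bool" where
  "gr_path E xs \<longleftrightarrow> gr_walk E xs \<and> distinct xs"

definition gr_connected :: "nat set \<Rightarrow> (nat \<Rightarrow> nat \<Rightarrow> bool) \<Rightarrow> bool" where
  "gr_connected V E \<longleftrightarrow> V \<noteq> {} \<and>
     (\<forall>u\<in>V. \<forall>v\<in>V. \<exists>p. gr_walk E p \<and> set p \<subseteq> V \<and> hd p = u \<and> last p = v)"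

definition gr_acyclic :: "(nat \<Rightarrow> nat \<Rightarrow> bool) \<Rightarrow> bool" where
  "gr_acyclic E \<longleftrightarrow> \<not> (\<exists>c. gr_path E c \<and> length c \<ge> 3 \<and> E (last c) (hd c))"

definition spanning_tree :: "nat set \<Rightarrow> (nat \<Rightarrow> nat \<Rightarrow> bool) \<Rightarrow> (nat \<Rightarrow> nat \<Rightarrow> bool) \<Rightarrow> bool" where
  "spanning_tree V G T \<longleftrightarrow> gr_simple V T \<and> (\<forall>u v. T u v \<longrightarrow> G u v) \<and>
     gr_connected V T \<and> gr_acyclic T"

definition tree_le :: "(nat \<Rightarrow> nat \<Rightarrow> bool) \<Rightarrow> nat \<Rightarrow> nat \<Rightarrow> nat \<Rightarrow> bool" where
  "tree_le T rt x y \<longleftrightarrow> (\<exists>p. gr_path T p \<and> hd p = rt \<and> last p = y \<and> x \<in> set p)"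

definition normal_spanning_tree ::
  "nat set \<Rightarrow> (nat \<Rightarrow> nat \<Rightarrow> bool) \<Rightarrow> (nat \<Rightarrow> nat \<Rightarrow> bool) \<Rightarrow> nat \<Rightarrow> bool" where
  "normal_spanning_tree V G T rt \<longleftrightarrow> spanning_tree V G T \<and> rt \<in> V \<and>
     (\<forall>u v. G u v \<longrightarrow> tree_le T rt u v \<or> tree_le T rt v u)"

definition tree_path :: "(nat \<Rightarrow> nat \<Rightarrow> bool) \<Rightarrow> nat \<Rightarrow> nat \<Rightarrow> nat list" where
  "tree_path T s t = (THE p. gr_path T p \<and> hd p = s \<and> last p = t)"

text \<open>Non-tree edges e_st, recorded as the pair (s,t) with v_s \<le> v_t in the tree order;
  each indexes one fundamental cycle.\<close>
definition nontree_edges ::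
  "nat set \<Rightarrow> (nat \<Rightarrow> nat \<Rightarrow> bool) \<Rightarrow> (nat \<Rightarrow> nat \<Rightarrow> bool) \<Rightarrow> nat \<Rightarrow> (nat \<times> nat) set" where
  "nontree_edges V G T rt = {(s,t). s \<in> V \<and> t \<in> V \<and> G s t \<and> \<not> T s t \<and> tree_le T rt s t}"

definition gain_graph :: "(nat \<Rightarrow> nat \<Rightarrow> bool) \<Rightarrow> (nat \<Rightarrow> nat \<Rightarrow> complex) \<Rightarrow> bool" where
  "gain_graph G \<phi> \<longleftrightarrow> (\<forall>u v. G u v \<longrightarrow> cmod (\<phi> u v) = 1 \<and> \<phi> v u = inverse (\<phi> u v))"

text \<open>Gain of the directed fundamental cycle of the non-tree edge (s,t), s \<le> t, in the suitably
  oriented graph: tree path s \<rightarrow> ... \<rightarrow> t oriented away from the root, then the edge t \<rightarrow> s.\<close>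
definition fund_cycle_gain ::
  "(nat \<Rightarrow> nat \<Rightarrow> bool) \<Rightarrow> (nat \<Rightarrow> nat \<Rightarrow> complex) \<Rightarrow> nat \<times> nat \<Rightarrow> complex" where
  "fund_cycle_gain T \<phi> e = (case e of (s,t) \<Rightarrow>
     (let p = tree_path T s t in (\<Prod>i < length p - 1. \<phi> (p ! i) (p ! Suc i)) * \<phi> t s))"

definition gain_adj_matrix :: "nat \<Rightarrow> (nat \<Rightarrow> nat \<Rightarrow> bool) \<Rightarrow> (nat \<Rightarrow> nat \<Rightarrow> complex) \<Rightarrow> complex mat" where
  "gain_adj_matrix n G \<phi> = mat n n (\<lambda>(s,t). if G s t then \<phi> s t else 0)"

text \<open>A_T(r), the angles r indexed by the non-tree edges (fundamental cycles).\<close>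
definition A_T ::
  "nat \<Rightarrow> (nat \<Rightarrow> nat \<Rightarrow> bool) \<Rightarrow> (nat \<Rightarrow> nat \<Rightarrow> bool) \<Rightarrow> nat \<Rightarrow> (nat \<times> nat \<Rightarrow> real)
     \<Rightarrow> (nat \<Rightarrow> nat \<Rightarrow> complex) set" where
  "A_T n G T rt r = {\<phi>. gain_graph G \<phi> \<and>
     (\<forall>e \<in> nontree_edges {0..<n} G T rt. fund_cycle_gain T \<phi> e = exp (\<i> * complex_of_real (r e)))}"

text \<open>(2\<pi> - x) mod 2\<pi> for x \<in> [0,2\<pi>).\<close>
definition neg_angle :: "real \<Rightarrow> real" where
  "neg_angle x = (if x = 0 then 0 else 2 * pi - x)"

definition mat_spectrum :: "complex mat \<Rightarrow> complex multiset" where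
  "mat_spectrum A = proots (char_poly A)"

end

theory Submission
  imports Defs
begin

(* Two gain graphs whose gains agree on every fundamental cycle of a spanning tree T are
   switching equivalent.  With P_v the T-path from the root to v, the potential
   zeta(v) = phi1(P_v) / phi2(P_v) satisfies phi1(u,v) zeta(u) = phi2(u,v) zeta(v) on a tree
   edge, because P_v extends P_u by that edge or vice versa, and on a non-tree edge because
   its fundamental cycle is a tree path closed by the edge; normality of T makes every
   non-tree edge close a fundamental cycle in one of its two orientations.  Switching
   conjugates the adjacency matrix by the diagonal matrix of zeta, so all members of A_T(r)
   are cospectral.  Complex conjugation maps A_T(s) into A_T(r) and transposes the adjacency
   matrix, which does not change the characteristic polynomial. *)

lemma gr_walk_iff: "gr_walk E p \<longleftrightarrow> p \<noteq> [] \<and> successively E p"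
  by (simp add: gr_walk_def successively_conv_nth)

lemma gr_path_iff: "gr_path E p \<longleftrightarrow> p \<noteq> [] \<and> successively E p \<and> distinct p"
  by (auto simp: gr_path_def gr_walk_iff)

lemma gr_path_Cons:
  "gr_path E (s # p) \<longleftrightarrow> s \<notin> set p \<and> (p = [] \<or> E s (hd p) \<and> gr_path E p)"
  by (auto simp: gr_path_iff successively_Cons)

lemma gr_path_appendD: "gr_path E (xs @ ys) \<Longrightarrow> xs \<noteq> [] \<Longrightarrow> gr_path E xs"
  by (simp add: gr_path_iff successively_append_iff)

lemma gr_path_snoc:
  "gr_path E p \<Longrightarrow> E (last p) v \<Longrightarrow> v \<notin> set p \<Longrightarrow> gr_path E (p @ [v])"
  by (simp add: gr_path_iff successively_append_iff)

lemma gr_simple_symp: "gr_simple V E \<Longrightarrow> symp E"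
  by (auto simp: gr_simple_def symp_def)

lemma gr_walk_imp_path:
  "gr_walk E w \<Longrightarrow> \<exists>p. gr_path E p \<and> hd p = hd w \<and> last p = last w"
proof (induction w rule: length_induct)
  case (1 w)
  show ?case
  proof (cases "distinct w")
    case True
    then show ?thesis using "1.prems" by (auto simp: gr_path_def)
  next
    case False
    then obtain xs ys zs y where w: "w = xs @ [y] @ ys @ [y] @ zs"
      using not_distinct_decomp by blast
    have "successively E ((xs @ [y] @ ys) @ y # zs)"
      using "1.prems" by (simp add: w gr_walk_iff)
    then have "successively E (xs @ [y]) \<and> successively E (y # zs)"
      by (simp only: successively_append_iff) (auto simp: successively_append_iff)
    then have "gr_walk E (xs @ [y] @ zs)"
      by (auto simp: gr_walk_iff successively_append_iff successively_Cons)
    moreover have "hd (xs @ [y] @ zs) = hd w" "last (xs @ [y] @ zs) = last w"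
      by (simp_all add: w hd_append)
    moreover have "length (xs @ [y] @ zs) < length w" by (simp add: w)
    ultimately show ?thesis using "1.IH" by metis
  qed
qed

lemma gr_acyclic_neighbour_paths_hd_eq:
  assumes sym: "symp E" and acyc: "gr_acyclic E"
    and p: "gr_path E p" and q: "gr_path E q" and s: "s \<notin> set p" "s \<notin> set q"
    and Ep: "E s (hd p)" and Eq: "E s (hd q)" and last_eq: "last p = last q"
  shows "hd p = hd q"
proof (rule ccontr)
  assume hd_ne: "hd p \<noteq> hd q"
  have ne: "p \<noteq> []" "q \<noteq> []" using p q by (auto simp: gr_path_iff)
  then have "\<exists>x \<in> set q. x \<in> set p" using last_eq by (metis last_in_set)
  then obtain ys x zs where q_split: "q = ys @ x # zs" and "x \<in> set p"
    and ys_off_p: "\<forall>y \<in> set ys. y \<notin> set p"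
    by (rule split_list_first_propE)
  then obtain us vs where p_split: "p = us @ x # vs" by (blast dest: split_list)
  \<comment> \<open>the cycle: from s into p up to its first meeting x with q, then back along q to s\<close>
  define c where "c = s # us @ x # rev ys"
  have "successively E ((s # us) @ [x])" "successively E (ys @ [x])"
    using p q Ep unfolding p_split q_split gr_path_iff
    by (auto simp: successively_append_iff successively_Cons hd_append split: if_splits)
  moreover have "successively E (x # rev ys)" if "successively E (ys @ [x])"
    using successively_mono[OF that] sym
    by (metis rev.simps(2) rev_rev_ident successively_rev symp_def)
  ultimately have "successively E ((s # us) @ x # rev ys)"
    by (simp only: successively_append_iff) simp
  then have "successively E c" by (simp add: c_def)
  moreover have "distinct c"
    using p q s ys_off_p unfolding c_def p_split q_split gr_path_iff by auto
  moreover have "length c \<ge> 3"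
    using hd_ne unfolding c_def p_split q_split by (cases us; cases ys) auto
  moreover have "E (last c) (hd c)"
  proof -
    have "last c = hd q"
      unfolding c_def q_split by (cases ys) (auto simp: last_rev)
    then show ?thesis using Eq sym by (simp add: c_def symp_def)
  qed
  ultimately show False
    using acyc by (auto simp: gr_acyclic_def gr_path_iff)
qed

lemma gr_acyclic_path_unique:
  assumes sym: "symp E" and acyc: "gr_acyclic E"
  shows "gr_path E p \<Longrightarrow> gr_path E q \<Longrightarrow> hd p = hd q \<Longrightarrow> last p = last q \<Longrightarrow> p = q"
proof (induction p arbitrary: q)
  case Nil
  then show ?case by (simp add: gr_path_iff)
next
  case (Cons s p)
  then obtain q' where q: "q = s # q'" by (metis gr_path_iff list.collapse list.sel(1))
  have p: "s \<notin> set p" "p = [] \<or> E s (hd p) \<and> gr_path E p"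
    and q': "s \<notin> set q'" "q' = [] \<or> E s (hd q') \<and> gr_path E q'"
    using Cons.prems q by (simp_all add: gr_path_Cons)
  consider "p = []" "q' = []" | "p \<noteq> []" "q' \<noteq> []"
    using Cons.prems(4) p(1) q'(1) q by (metis last.simps last_in_set)
  then show ?case
  proof cases
    case 2
    then have "hd p = hd q'"
      using gr_acyclic_neighbour_paths_hd_eq[OF sym acyc] p q' Cons.prems(4) q by auto
    then show ?thesis using Cons.IH p q' 2 Cons.prems(4) q by auto
  qed (simp add: q)
qed

lemma tree_path_eq:
  assumes "symp T" "gr_acyclic T" "gr_path T p"
  shows "tree_path T (hd p) (last p) = p"
  unfolding tree_path_def
  by (rule the_equality) (use assms gr_acyclic_path_unique in auto)

lemma tree_path_connects:
  assumes "gr_simple V T" "gr_connected V T" "gr_acyclic T" "s \<in> V" "t \<in> V"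
  shows "gr_path T (tree_path T s t) \<and> hd (tree_path T s t) = s \<and> last (tree_path T s t) = t"
proof -
  obtain w where "gr_walk T w" "hd w = s" "last w = t"
    using assms(2,4,5) unfolding gr_connected_def by blast
  then obtain p where "gr_path T p" "hd p = s" "last p = t"
    using gr_walk_imp_path by blast
  then show ?thesis
    using tree_path_eq[OF gr_simple_symp[OF assms(1)] assms(3)] by metis
qed

lemma tree_edge_root_paths:
  assumes sym: "symp T" and acyc: "gr_acyclic T" and "T u v" "u \<noteq> v"
    and pu: "gr_path T pu" "hd pu = rt" "last pu = u"
    and pv: "gr_path T pv" "hd pv = rt" "last pv = v"
  shows "pv = pu @ [v] \<or> pu = pv @ [u]"
proof -
  note unique = gr_acyclic_path_unique[OF sym acyc]
  have ne: "pu \<noteq> []" "pv \<noteq> []" using pu pv by (auto simp: gr_path_iff)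
  consider "v \<notin> set pu" | "u \<notin> set pv" | "v \<in> set pu" "u \<in> set pv" by blast
  then show ?thesis
  proof cases
    case 1
    have "gr_path T (pu @ [v])" using gr_path_snoc[OF pu(1)] pu(3) 1 \<open>T u v\<close> by simp
    then show ?thesis using unique[OF pv(1)] pu pv ne by simp
  next
    case 2
    have "T v u" using sym \<open>T u v\<close> by (simp add: symp_def)
    then have "gr_path T (pv @ [u])" using gr_path_snoc[OF pv(1)] pv(3) 2 by simp
    then show ?thesis using unique[OF pu(1)] pu pv ne by simp
  next
    case 3
    then obtain xs ys where pu_split: "pu = xs @ v # ys" by (blast dest: split_list)
    have "gr_path T (xs @ [v])" using gr_path_appendD[of T "xs @ [v]" ys] pu(1) pu_split by simp
    moreover have "hd (xs @ [v]) = rt" using pu(2) pu_split by (cases xs) auto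
    ultimately have "pv = xs @ [v]" using unique[OF pv(1)] pv(2,3) by simp
    moreover have "u \<in> set ys" using pu(3) \<open>u \<noteq> v\<close> pu_split by (cases ys rule: rev_cases) auto
    moreover have "distinct pu" using pu(1) by (simp add: gr_path_iff)
    ultimately show ?thesis using 3 pu_split by auto
  qed
qed

definition walk_gain :: "('a \<Rightarrow> 'a \<Rightarrow> 'b::comm_monoid_mult) \<Rightarrow> 'a list \<Rightarrow> 'b" where
  "walk_gain \<phi> p = (\<Prod>i < length p - 1. \<phi> (p ! i) (p ! Suc i))"

lemma walk_gain_Nil [simp]: "walk_gain \<phi> [] = 1"
  and walk_gain_singleton [simp]: "walk_gain \<phi> [a] = 1"
  by (simp_all add: walk_gain_def)

lemma walk_gain_Cons_Cons [simp]: "walk_gain \<phi> (a # b # w) = \<phi> a b * walk_gain \<phi> (b # w)"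
  unfolding walk_gain_def by (simp add: prod.lessThan_Suc_shift del: prod.lessThan_Suc)

lemma walk_gain_snoc: "p \<noteq> [] \<Longrightarrow> walk_gain \<phi> (p @ [v]) = walk_gain \<phi> p * \<phi> (last p) v"
  by (induction p rule: induct_list012) (auto simp: ac_simps)

lemma walk_gain_nonzero:
  fixes \<phi> :: "'a \<Rightarrow> 'a \<Rightarrow> 'b::field"
  shows "(\<And>u v. E u v \<Longrightarrow> \<phi> u v \<noteq> 0) \<Longrightarrow> successively E p \<Longrightarrow> walk_gain \<phi> p \<noteq> 0"
  by (induction p rule: induct_list012) auto

lemma walk_gain_telescope:
  assumes "\<And>u v. E u v \<Longrightarrow> \<phi>1 u v * \<zeta> u = \<phi>2 u v * \<zeta> v"
  shows "successively E p \<Longrightarrow> p \<noteq> [] \<Longrightarrow>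
    walk_gain \<phi>1 p * \<zeta> (hd p) = walk_gain \<phi>2 p * \<zeta> (last p)"
proof (induction p rule: induct_list012)
  case (3 a b w)
  have "walk_gain \<phi>1 (a # b # w) * \<zeta> a = walk_gain \<phi>1 (b # w) * (\<phi>1 a b * \<zeta> a)"
    by (simp add: ac_simps)
  also have "\<dots> = walk_gain \<phi>1 (b # w) * (\<phi>2 a b * \<zeta> b)"
    using assms 3 by simp
  also have "\<dots> = \<phi>2 a b * (walk_gain \<phi>1 (b # w) * \<zeta> b)"
    by (simp add: ac_simps)
  also have "\<dots> = \<phi>2 a b * (walk_gain \<phi>2 (b # w) * \<zeta> (last (b # w)))"
    using 3 by simp
  finally show ?case by (simp add: ac_simps)
qed auto

lemma fund_cycle_gain_walk_gain:
  "fund_cycle_gain T \<phi> (s, t) = walk_gain \<phi> (tree_path T s t) * \<phi> t s"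
  by (simp add: fund_cycle_gain_def walk_gain_def Let_def)

lemma gain_graph_nonzero: "gain_graph G \<phi> \<Longrightarrow> G u v \<Longrightarrow> \<phi> u v \<noteq> 0"
  by (metis gain_graph_def norm_zero zero_neq_one)

lemma gain_graph_reverse: "gain_graph G \<phi> \<Longrightarrow> G u v \<Longrightarrow> \<phi> v u = cnj (\<phi> u v)"
  by (metis divide_conv_cnj gain_graph_def inverse_eq_divide mult_1)

lemma gain_graph_switch_reverse:
  assumes "gain_graph G \<phi>1" "gain_graph G \<phi>2" "G u v"
    and "\<phi>1 v u * \<zeta> v = \<phi>2 v u * \<zeta> u"
  shows "\<phi>1 u v * \<zeta> u = \<phi>2 u v * \<zeta> v"
  using assms gain_graph_nonzero[OF assms(1,3)] gain_graph_nonzero[OF assms(2,3)]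
  by (auto simp: gain_graph_def field_simps)

definition tree_potential ::
  "(nat \<Rightarrow> nat \<Rightarrow> bool) \<Rightarrow> nat \<Rightarrow> (nat \<Rightarrow> nat \<Rightarrow> 'b::field) \<Rightarrow> (nat \<Rightarrow> nat \<Rightarrow> 'b) \<Rightarrow>
    nat \<Rightarrow> 'b" where
  "tree_potential T rt \<phi>1 \<phi>2 v = walk_gain \<phi>1 (tree_path T rt v) / walk_gain \<phi>2 (tree_path T rt v)"

lemma spanning_tree_walk_gain_nonzero:
  assumes "spanning_tree V G T" "gain_graph G \<phi>" "s \<in> V" "t \<in> V"
  shows "walk_gain \<phi> (tree_path T s t) \<noteq> 0"
proof -
  have "successively T (tree_path T s t)"
    using assms tree_path_connects by (auto simp: spanning_tree_def gr_path_iff)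
  then have "successively G (tree_path T s t)"
    using assms(1) by (auto simp: spanning_tree_def elim: successively_mono)
  then show ?thesis using walk_gain_nonzero gain_graph_nonzero[OF assms(2)] by blast
qed

lemma tree_potential_nonzero:
  assumes "spanning_tree V G T" "rt \<in> V" "gain_graph G \<phi>1" "gain_graph G \<phi>2" "v \<in> V"
  shows "tree_potential T rt \<phi>1 \<phi>2 v \<noteq> 0"
  using spanning_tree_walk_gain_nonzero[OF assms(1)] assms(2-5) by (simp add: tree_potential_def)

lemma tree_potential_tree_edge:
  assumes st: "spanning_tree V G T" and rt: "rt \<in> V"
    and g: "gain_graph G \<phi>1" "gain_graph G \<phi>2" and "T u v"
  defines "\<zeta> \<equiv> tree_potential T rt \<phi>1 \<phi>2"
  shows "\<phi>1 u v * \<zeta> u = \<phi>2 u v * \<zeta> v"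
proof -
  have simple: "gr_simple V T" and conn: "gr_connected V T" and acyc: "gr_acyclic T"
    and TG: "\<And>x y. T x y \<Longrightarrow> G x y"
    using st by (auto simp: spanning_tree_def)
  have TV: "x \<in> V \<and> y \<in> V" if "T x y" for x y
    using simple that by (auto simp: gr_simple_def)
  note root_path = tree_path_connects[OF simple conn acyc rt]
  have extend: "\<phi>1 x y * \<zeta> x = \<phi>2 x y * \<zeta> y"
    if "T x y" and path_y: "tree_path T rt y = tree_path T rt x @ [y]" for x y
  proof -
    let ?p = "tree_path T rt x"
    have "?p \<noteq> []" "last ?p = x"
      using root_path TV[OF that(1)] by (auto simp: gr_path_iff)
    moreover have "walk_gain \<phi>2 ?p \<noteq> 0" "\<phi>2 x y \<noteq> 0"
      using spanning_tree_walk_gain_nonzero[OF st g(2) rt] gain_graph_nonzero[OF g(2)]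
        TV[OF that(1)] TG[OF that(1)] by auto
    ultimately show ?thesis
      by (simp add: \<zeta>_def tree_potential_def path_y walk_gain_snoc field_simps)
  qed
  have "tree_path T rt v = tree_path T rt u @ [v] \<or> tree_path T rt u = tree_path T rt v @ [u]"
    using tree_edge_root_paths[OF gr_simple_symp[OF simple] acyc \<open>T u v\<close>] root_path
      TV[OF \<open>T u v\<close>] simple \<open>T u v\<close> by (auto simp: gr_simple_def)
  moreover have "T v u" using simple \<open>T u v\<close> by (auto simp: gr_simple_def)
  ultimately show ?thesis
    using extend \<open>T u v\<close> gain_graph_switch_reverse[OF g TG] by metis
qed

lemma tree_potential_fund_cycle:
  assumes st: "spanning_tree V G T" and rt: "rt \<in> V"
    and g: "gain_graph G \<phi>1" "gain_graph G \<phi>2"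
    and "s \<in> V" "t \<in> V" "G s t"
    and fund_eq: "fund_cycle_gain T \<phi>1 (s, t) = fund_cycle_gain T \<phi>2 (s, t)"
  defines "\<zeta> \<equiv> tree_potential T rt \<phi>1 \<phi>2"
  shows "\<phi>1 s t * \<zeta> s = \<phi>2 s t * \<zeta> t"
proof -
  let ?q = "tree_path T s t"
  have q: "successively T ?q" "?q \<noteq> []" "hd ?q = s" "last ?q = t"
    using st tree_path_connects \<open>s \<in> V\<close> \<open>t \<in> V\<close> by (auto simp: spanning_tree_def gr_path_iff)
  have tele: "walk_gain \<phi>1 ?q * \<zeta> s = walk_gain \<phi>2 ?q * \<zeta> t"
    using walk_gain_telescope[OF tree_potential_tree_edge[OF st rt g] q(1,2)] q(3,4)
    unfolding \<zeta>_def by simp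
  have cyc: "walk_gain \<phi>1 ?q * \<phi>1 t s = walk_gain \<phi>2 ?q * \<phi>2 t s"
    using fund_eq by (simp add: fund_cycle_gain_walk_gain)
  have "walk_gain \<phi>2 ?q * (\<phi>1 t s * \<zeta> t) = \<phi>1 t s * (walk_gain \<phi>1 ?q * \<zeta> s)"
    using tele by (simp add: ac_simps)
  also have "\<dots> = (walk_gain \<phi>1 ?q * \<phi>1 t s) * \<zeta> s"
    by (simp add: ac_simps)
  also have "\<dots> = walk_gain \<phi>2 ?q * (\<phi>2 t s * \<zeta> s)"
    unfolding cyc by (simp add: ac_simps)
  finally have "\<phi>1 t s * \<zeta> t = \<phi>2 t s * \<zeta> s"
    using spanning_tree_walk_gain_nonzero[OF st g(2) \<open>s \<in> V\<close> \<open>t \<in> V\<close>] by simp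
  then show ?thesis using gain_graph_switch_reverse[OF g \<open>G s t\<close>] by blast
qed

lemma equal_fund_cycle_gains_imp_switching:
  assumes "gr_simple V G" and nst: "normal_spanning_tree V G T rt"
    and g: "gain_graph G \<phi>1" "gain_graph G \<phi>2"
    and fund_eq: "\<forall>e \<in> nontree_edges V G T rt. fund_cycle_gain T \<phi>1 e = fund_cycle_gain T \<phi>2 e"
  shows "\<exists>\<zeta>. (\<forall>v \<in> V. \<zeta> v \<noteq> 0) \<and> (\<forall>u v. G u v \<longrightarrow> \<phi>1 u v * \<zeta> u = \<phi>2 u v * \<zeta> v)"
proof (intro exI conjI allI impI ballI)
  let ?\<zeta> = "tree_potential T rt \<phi>1 \<phi>2"
  have st: "spanning_tree V G T" and rt: "rt \<in> V"
    and normal: "\<And>u v. G u v \<Longrightarrow> tree_le T rt u v \<or> tree_le T rt v u"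
    using nst by (auto simp: normal_spanning_tree_def)
  show "?\<zeta> v \<noteq> 0" if "v \<in> V" for v
    using tree_potential_nonzero[OF st rt g that] .
  show "\<phi>1 u v * ?\<zeta> u = \<phi>2 u v * ?\<zeta> v" if "G u v" for u v
  proof -
    have V: "u \<in> V" "v \<in> V" "G v u"
      using \<open>gr_simple V G\<close> \<open>G u v\<close> by (auto simp: gr_simple_def)
    have "T v u \<longleftrightarrow> T u v"
      using st gr_simple_symp by (auto simp: spanning_tree_def symp_def)
    then consider "T u v" | "(u, v) \<in> nontree_edges V G T rt" | "(v, u) \<in> nontree_edges V G T rt"
      using normal[OF \<open>G u v\<close>] V \<open>G u v\<close> unfolding nontree_edges_def by blast
    then show ?thesis
    proof cases
      case 1
      then show ?thesis using tree_potential_tree_edge[OF st rt g] by blast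
    next
      case 2
      then show ?thesis
        using tree_potential_fund_cycle[OF st rt g V(1,2) \<open>G u v\<close>] fund_eq by blast
    next
      case 3
      then show ?thesis
        using tree_potential_fund_cycle[OF st rt g V(2,1,3)] fund_eq
          gain_graph_switch_reverse[OF g \<open>G u v\<close>] by blast
    qed
  qed
qed

lemma gain_adj_matrix_switching_similar:
  assumes nonzero: "\<And>v. v < n \<Longrightarrow> \<zeta> v \<noteq> 0"
    and switch: "\<And>u v. G u v \<Longrightarrow> \<phi>1 u v * \<zeta> u = \<phi>2 u v * \<zeta> v"
  shows "similar_mat (gain_adj_matrix n G \<phi>1) (gain_adj_matrix n G \<phi>2)"
proof (rule similar_matI)
  let ?P = "mat_diag n (\<lambda>i. inverse (\<zeta> i))" and ?Q = "mat_diag n \<zeta>"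
  show "{gain_adj_matrix n G \<phi>1, gain_adj_matrix n G \<phi>2, ?P, ?Q} \<subseteq> carrier_mat n n"
    by (simp add: gain_adj_matrix_def)
  show "?P * ?Q = 1\<^sub>m n" "?Q * ?P = 1\<^sub>m n"
    unfolding mat_diag_diag by (auto intro!: eq_matI simp: mat_diag_def nonzero)
  show "gain_adj_matrix n G \<phi>1 = ?P * gain_adj_matrix n G \<phi>2 * ?Q"
  proof (rule eq_matI)
    fix i j
    assume "i < dim_row (?P * gain_adj_matrix n G \<phi>2 * ?Q)"
      and "j < dim_col (?P * gain_adj_matrix n G \<phi>2 * ?Q)"
    then have ij: "i < n" "j < n" by (simp_all add: mat_diag_def)
    have "(?P * gain_adj_matrix n G \<phi>2 * ?Q) $$ (i, j) =
        inverse (\<zeta> i) * gain_adj_matrix n G \<phi>2 $$ (i, j) * \<zeta> j"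
      using ij
      by (simp add: mat_diag_mult_left[of _ n n] mat_diag_mult_right[of _ n n] gain_adj_matrix_def)
    also have "\<dots> = gain_adj_matrix n G \<phi>1 $$ (i, j)"
      using ij nonzero[of i] switch[of i j] by (auto simp: gain_adj_matrix_def field_simps)
    finally show "gain_adj_matrix n G \<phi>1 $$ (i, j) = (?P * gain_adj_matrix n G \<phi>2 * ?Q) $$ (i, j)"
      ..
  qed (simp_all add: gain_adj_matrix_def mat_diag_def)
qed

lemma gain_adj_matrix_cnj:
  assumes "symp G" "gain_graph G \<phi>"
  shows "gain_adj_matrix n G (\<lambda>u v. cnj (\<phi> u v)) = transpose_mat (gain_adj_matrix n G \<phi>)"
proof (rule eq_matI)
  fix i j assume "i < dim_row (transpose_mat (gain_adj_matrix n G \<phi>))"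
    "j < dim_col (transpose_mat (gain_adj_matrix n G \<phi>))"
  then show "gain_adj_matrix n G (\<lambda>u v. cnj (\<phi> u v)) $$ (i, j) =
      transpose_mat (gain_adj_matrix n G \<phi>) $$ (i, j)"
    using assms gain_graph_reverse[OF assms(2), of j i]
    by (simp add: gain_adj_matrix_def symp_def)
qed (simp_all add: gain_adj_matrix_def)

lemma A_T_cospectral:
  assumes "gr_simple {0..<n} G" "normal_spanning_tree {0..<n} G T rt"
    and "\<phi>1 \<in> A_T n G T rt r" "\<phi>2 \<in> A_T n G T rt r"
  shows "mat_spectrum (gain_adj_matrix n G \<phi>1) = mat_spectrum (gain_adj_matrix n G \<phi>2)"
proof -
  have g: "gain_graph G \<phi>1" "gain_graph G \<phi>2"
    and "\<forall>e \<in> nontree_edges {0..<n} G T rt. fund_cycle_gain T \<phi>1 e = fund_cycle_gain T \<phi>2 e"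
    using assms(3,4) by (auto simp: A_T_def)
  then obtain \<zeta> where "\<forall>v \<in> {0..<n}. \<zeta> v \<noteq> 0"
    and "\<forall>u v. G u v \<longrightarrow> \<phi>1 u v * \<zeta> u = \<phi>2 u v * \<zeta> v"
    using equal_fund_cycle_gains_imp_switching[OF assms(1,2) g] by blast
  then have "similar_mat (gain_adj_matrix n G \<phi>1) (gain_adj_matrix n G \<phi>2)"
    by (intro gain_adj_matrix_switching_similar) auto
  then show ?thesis unfolding mat_spectrum_def by (rule arg_cong[OF char_poly_similar])
qed

lemma mat_spectrum_gain_adj_matrix_cnj:
  assumes "symp G" "gain_graph G \<phi>"
  shows "mat_spectrum (gain_adj_matrix n G (\<lambda>u v. cnj (\<phi> u v))) = mat_spectrum (gain_adj_matrix n G \<phi>)"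
  using gain_adj_matrix_cnj[OF assms] char_poly_transpose_mat[of "gain_adj_matrix n G \<phi>" n]
  by (simp add: mat_spectrum_def gain_adj_matrix_def)

lemma cnj_exp_neg_angle: "cnj (exp (\<i> * complex_of_real (neg_angle x))) = exp (\<i> * complex_of_real x)"
proof -
  have "cnj (cis (neg_angle x)) = cis x"
    by (simp add: cis_cnj neg_angle_def cis.ctr cos_diff sin_diff complex_eq_iff)
  then show ?thesis by (simp add: cis_conv_exp)
qed

lemma cnj_mem_A_T_neg_angle:
  assumes "\<phi> \<in> A_T n G T rt (neg_angle \<circ> r)"
  shows "(\<lambda>u v. cnj (\<phi> u v)) \<in> A_T n G T rt r"
proof -
  have "fund_cycle_gain T (\<lambda>u v. cnj (\<phi> u v)) e = cnj (fund_cycle_gain T \<phi> e)" for e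
    by (cases e) (simp add: fund_cycle_gain_def Let_def)
  then show ?thesis using assms by (auto simp: A_T_def gain_graph_def cnj_exp_neg_angle)
qed

lemma A_T_neg_angle_cospectral_member:
  assumes "symp G" "\<phi> \<in> A_T n G T rt r \<union> A_T n G T rt (neg_angle \<circ> r)"
  shows "\<exists>\<psi> \<in> A_T n G T rt r.
    mat_spectrum (gain_adj_matrix n G \<phi>) = mat_spectrum (gain_adj_matrix n G \<psi>)"
proof (cases "\<phi> \<in> A_T n G T rt r")
  case False
  then have neg: "\<phi> \<in> A_T n G T rt (neg_angle \<circ> r)" using assms(2) by blast
  then have "gain_graph G \<phi>" by (simp add: A_T_def)
  then have "mat_spectrum (gain_adj_matrix n G \<phi>) =
      mat_spectrum (gain_adj_matrix n G (\<lambda>u v. cnj (\<phi> u v)))"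
    using mat_spectrum_gain_adj_matrix_cnj[OF assms(1)] by simp
  then show ?thesis using cnj_mem_A_T_neg_angle[OF neg] by blast
qed blast

theorem lemma3p3:
  fixes n :: nat and G T :: "nat \<Rightarrow> nat \<Rightarrow> bool" and rt :: nat and r :: "nat \<times> nat \<Rightarrow> real"
  assumes "gr_simple {0..<n} G"
    and "gr_connected {0..<n} G"
    and "normal_spanning_tree {0..<n} G T rt"
    and "\<forall>e \<in> nontree_edges {0..<n} G T rt. 0 \<le> r e \<and> r e < 2 * pi"
    and "\<exists>e \<in> nontree_edges {0..<n} G T rt. r e \<noteq> 0"
  shows "\<forall>\<phi>1 \<in> A_T n G T rt r \<union> A_T n G T rt (neg_angle \<circ> r).
         \<forall>\<phi>2 \<in> A_T n G T rt r \<union> A_T n G T rt (neg_angle \<circ> r).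
           mat_spectrum (gain_adj_matrix n G \<phi>1) = mat_spectrum (gain_adj_matrix n G \<phi>2)"
proof (intro ballI)
  fix \<phi>1 \<phi>2
  assume "\<phi>1 \<in> A_T n G T rt r \<union> A_T n G T rt (neg_angle \<circ> r)"
    and "\<phi>2 \<in> A_T n G T rt r \<union> A_T n G T rt (neg_angle \<circ> r)"
  then obtain \<psi>1 \<psi>2 where "\<psi>1 \<in> A_T n G T rt r" "\<psi>2 \<in> A_T n G T rt r"
    and "mat_spectrum (gain_adj_matrix n G \<phi>1) = mat_spectrum (gain_adj_matrix n G \<psi>1)"
    and "mat_spectrum (gain_adj_matrix n G \<phi>2) = mat_spectrum (gain_adj_matrix n G \<psi>2)"
    using A_T_neg_angle_cospectral_member[OF gr_simple_symp[OF assms(1)]] by meson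
  then show "mat_spectrum (gain_adj_matrix n G \<phi>1) = mat_spectrum (gain_adj_matrix n G \<phi>2)"
    using A_T_cospectral[OF assms(1,3), of \<psi>1 r \<psi>2] by simp
qed

end
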